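(* Consider online bilateral trade with one seller of fixed unknown cost $c\in[0,1]$ and one buyer of fixed unknown value $v\in[0,1]$, where $v>c$, over $T$ rounds. Run the following algorithm (Optimistic-Binary-Search), which posts a single price each round. Maintain numbers $\ell_t,u_t$ with $\ell_1=0$, $u_1=1$. In round $t$ (exploration phase) post the single price $p_t=(\ell_t+u_t)/2$ to both traders. If both traders accept, the algorithm posts this same price $p_t$ in every remaining round (exploitation phase). If the seller rejects, set $\ell_{t+1}=p_t$, $u_{t+1}=u_t$; otherwise (the buyer rejects) set $\ell_{t+1}=\ell_t$, $u_{t+1}=p_t$. Then the cumulative gains-from-trade regret of this algorithm is at most $1$, for every $T$.
   Context: Trading model: in each round a price is posted; the seller accepts a price $p$ iff $p\ge c$ and the buyer accepts a price $p$ iff $p\le v$ (ties are broken in favour of accepting). A trade occurs iff both accept, producing gains-from-trade $v-c$; otherwise the gains-from-trade of the round is $0$. The benchmark is the optimal per-round gains-from-trade $v-c$, and the cumulative regret is $\sum_{t=1}^T\big((v-c)-\mathrm{GFT}_t\big)$, where $\mathrm{GFT}_t$ is the gains-from-trade realized in round $t$. *)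

theory Defs
  imports "HOL-Analysis.Analysis"
begin

definition seller_accepts :: "real \<Rightarrow> real \<Rightarrow> bool" where
  "seller_accepts c p \<longleftrightarrow> c \<le> p"

definition buyer_accepts :: "real \<Rightarrow> real \<Rightarrow> bool" where
  "buyer_accepts v p \<longleftrightarrow> p \<le> v"

definition gft :: "real \<Rightarrow> real \<Rightarrow> real \<Rightarrow> real" where
  "gft c v p = (if seller_accepts c p \<and> buyer_accepts v p then v - c else 0)"

text \<open>State of Optimistic-Binary-Search at the start of a round:
  (l, u, phase) where phase = None means exploration,
  phase = Some p means exploitation with fixed price p.\<close>
type_synonym obs_state = "real \<times> real \<times> real option"

definition obs_price :: "obs_state \<Rightarrow> real" where
  "obs_price s = (case s of (l, u, None) \<Rightarrow> (l + u) / 2 | (_, _, Some p) \<Rightarrow> p)"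

definition obs_step :: "real \<Rightarrow> real \<Rightarrow> obs_state \<Rightarrow> obs_state" where
  "obs_step c v s = (case s of
      (l, u, Some p) \<Rightarrow> (l, u, Some p)
    | (l, u, None) \<Rightarrow>
        (let p = (l + u) / 2 in
         if seller_accepts c p \<and> buyer_accepts v p then (l, u, Some p)
         else if \<not> seller_accepts c p then (p, u, None)
         else (l, p, None)))"

text \<open>State at the start of round t+1 (rounds indexed from 0 here; state 0 is round 1).\<close>
fun obs_state :: "real \<Rightarrow> real \<Rightarrow> nat \<Rightarrow> obs_state" where
  "obs_state c v 0 = (0, 1, None)"
| "obs_state c v (Suc t) = obs_step c v (obs_state c v t)"

definition obs_posted_price :: "real \<Rightarrow> real \<Rightarrow> nat \<Rightarrow> real" where
  "obs_posted_price c v t = obs_price (obs_state c v t)"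

definition obs_regret :: "real \<Rightarrow> real \<Rightarrow> nat \<Rightarrow> real" where
  "obs_regret c v T = (\<Sum>t<T. (v - c) - gft c v (obs_posted_price c v t))"

end

theory Submission
  imports Defs
begin

text \<open>While no trade has happened, every round is a bisection step of an interval that
  starts as [0, 1] and always contains [c, v]: a rejection by the seller shows c > p, one by
  the buyer shows p > v. After t such rounds the interval has length 2 ^ -t, so the gap
  v - c is at most 2 ^ -t and the t failed rounds cost t (v - c) \<le> t / 2 ^ t \<le> 1. Once
  both traders accept, the price lies in [c, v] and every later round is regret-free.\<close>

lemma gft_eq_gap: "c \<le> p \<Longrightarrow> p \<le> v \<Longrightarrow> gft c v p = v - c"
  by (simp add: gft_def seller_accepts_def buyer_accepts_def)

lemma gft_eq_zero: "\<not> (c \<le> p \<and> p \<le> v) \<Longrightarrow> gft c v p = 0"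
  by (auto simp: gft_def seller_accepts_def buyer_accepts_def)

lemma obs_regret_Suc:
  "obs_regret c v (Suc t) = obs_regret c v t + ((v - c) - gft c v (obs_posted_price c v t))"
  unfolding obs_regret_def by simp

lemma obs_step_exploit: "obs_step c v (l, u, Some p) = (l, u, Some p)"
  by (simp add: obs_step_def)

lemma obs_step_explore:
  "obs_step c v (l, u, None) =
     (let p = (l + u) / 2 in
      if c \<le> p \<and> p \<le> v then (l, u, Some p)
      else if p < c then (p, u, None)
      else (l, p, None))"
  by (simp add: obs_step_def seller_accepts_def buyer_accepts_def Let_def not_le)

lemma mult_le_one_if_le_inverse_two_power:
  fixes x :: real
  assumes "x \<le> 1 / 2 ^ t"
  shows "real t * x \<le> 1"
proof -
  have "real t * x \<le> real t / 2 ^ t"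
    using mult_left_mono[OF assms, of "real t"] by simp
  also have "\<dots> \<le> 1"
    using less_exp[of t] by (simp add: field_simps of_nat_less_numeral_power_cancel_iff less_imp_le)
  finally show ?thesis .
qed

lemma obs_state_explore:
  assumes "0 \<le> c" "v \<le> 1"
  shows "obs_state c v t = (l, u, None) \<Longrightarrow>
    l \<le> c \<and> v \<le> u \<and> u - l = 1 / 2 ^ t \<and> obs_regret c v t = t * (v - c)"
proof (induction t arbitrary: l u)
  case 0
  then show ?case using assms by (simp add: obs_regret_def)
next
  case (Suc t)
  obtain l' u' ph where state: "obs_state c v t = (l', u', ph)"
    by (cases "obs_state c v t") auto
  have "ph = None"
    using Suc.prems state by (cases ph) (auto simp: obs_step_exploit)
  with state have prev: "obs_state c v t = (l', u', None)"
    by simp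
  define p where "p = (l' + u') / 2"
  have IH: "l' \<le> c" "v \<le> u'" "u' - l' = 1 / 2 ^ t" "obs_regret c v t = t * (v - c)"
    using Suc.IH[OF prev] by auto
  have no_trade: "\<not> (c \<le> p \<and> p \<le> v)" and
    next_state: "(l, u) = (if p < c then (p, u') else (l', p))"
    using Suc.prems prev by (auto simp: obs_step_explore p_def Let_def split: if_splits)
  have "obs_posted_price c v t = p"
    by (simp add: obs_posted_price_def obs_price_def prev p_def)
  then have "obs_regret c v (Suc t) = Suc t * (v - c)"
    using IH(4) gft_eq_zero[OF no_trade] by (simp add: obs_regret_Suc algebra_simps)
  moreover have "l \<le> c" "v \<le> u"
    using IH(1,2) no_trade next_state by (auto split: if_splits)
  moreover have "u - l = (u' - l') / 2"
    using next_state by (auto simp: p_def split: if_splits)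
  ultimately show ?case
    using IH(3) by simp
qed

lemma obs_regret_le_one_explore:
  assumes "0 \<le> c" "v \<le> 1" "obs_state c v t = (l, u, None)"
  shows "obs_regret c v t \<le> 1"
  using obs_state_explore[OF assms] mult_le_one_if_le_inverse_two_power[of "v - c" t] by auto

lemma obs_state_exploit:
  assumes "0 \<le> c" "v \<le> 1"
  shows "obs_state c v t = (l, u, Some p) \<Longrightarrow> c \<le> p \<and> p \<le> v \<and> obs_regret c v t \<le> 1"
proof (induction t arbitrary: l u)
  case 0
  then show ?case by simp
next
  case (Suc t)
  obtain l' u' ph where prev: "obs_state c v t = (l', u', ph)"
    by (cases "obs_state c v t") auto
  show ?case
  proof (cases ph)
    case None
    then have "obs_regret c v t \<le> 1"
      using obs_regret_le_one_explore[OF assms] prev by blast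
    moreover have trade: "p = (l' + u') / 2" "c \<le> p" "p \<le> v"
      using Suc.prems prev None by (auto simp: obs_step_explore Let_def split: if_splits)
    moreover have "obs_posted_price c v t = p"
      by (simp add: obs_posted_price_def obs_price_def prev None trade(1))
    ultimately show ?thesis
      by (simp add: obs_regret_Suc gft_eq_gap)
  next
    case (Some q)
    then have "q = p"
      using Suc.prems prev by (simp add: obs_step_exploit)
    with Some Suc.IH prev have "c \<le> p" "p \<le> v" "obs_regret c v t \<le> 1"
      by blast+
    moreover have "obs_posted_price c v t = p"
      by (simp add: obs_posted_price_def obs_price_def prev Some \<open>q = p\<close>)
    ultimately show ?thesis
      by (simp add: obs_regret_Suc gft_eq_gap)
  qed
qed

theorem theorem3p1:
  fixes c v :: real and T :: nat
  assumes "0 \<le> c" and "c \<le> 1" and "0 \<le> v" and "v \<le> 1" and "c < v"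
  shows "obs_regret c v T \<le> 1"
proof -
  obtain l u ph where state: "obs_state c v T = (l, u, ph)"
    by (cases "obs_state c v T") auto
  show ?thesis
  proof (cases ph)
    case None
    then show ?thesis
      using obs_regret_le_one_explore[OF \<open>0 \<le> c\<close> \<open>v \<le> 1\<close>] state by blast
  next
    case Some
    then show ?thesis
      using obs_state_exploit[OF \<open>0 \<le> c\<close> \<open>v \<le> 1\<close>] state by blast
  qed
qed

end
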